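(* Let $\beta\in\mathbb{F}G$ and let $\mathcal{C}_{1,\beta}$ be the corresponding $2$-quasi-abelian code over $\mathbb{F}$, with parameters $[2n,k,d_{\min}]$ (length $2n$, dimension $k$, minimum Hamming distance $d_{\min}$). Then there exists $d\in\mathcal{S}G$ with $\pi(d)=\beta$ such that $\pi(\mathfrak{C}_{1,d})=\mathcal{C}_{1,\beta}$ and $\mathfrak{C}_{1,d}$ is a $2$-quasi-abelian code over $\mathcal{S}$ with parameters $[2n,k,d_{\min}]$, i.e. of length $2n$, free over $\mathcal{S}$ of rank $k$, and of minimum Hamming distance $d_{\min}$.
   Context: Let $\mathcal{S}$ be a finite commutative chain ring with maximal ideal $\mathbf{m}$ and residue field $\mathbb{F}=\mathcal{S}/\mathbf{m}=\mathbb{F}_{q^2}$. Let $G$ be a finite abelian group of odd order $n$ with $\gcd(n,q)=1$. The map $\pi:\mathcal{S}G\to\mathbb{F}G$ reduces each coefficient modulo $\mathbf{m}$, applied componentwise on $(\mathcal{S}G)^2$. For $c,d\in\mathcal{S}G$, $\mathfrak{C}_{c,d}=\{(uc,ud):u\in\mathcal{S}G\}$, and for $a,b\in\mathbb{F}G$, $\mathcal{C}_{a,b}=\{(sa,sb):s\in\mathbb{F}G\}$. Elements of $(\mathcal{S}G)^2$ are viewed as words of length $2n$ over $\mathcal{S}$ via their coefficients; the Hamming weight counts nonzero coefficients. *)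

theory Defs
  imports "HOL-Computational_Algebra.Primes"
begin

definition r_ideal :: "'a::comm_ring_1 set \<Rightarrow> bool" where
  "r_ideal I \<longleftrightarrow> 0 \<in> I \<and> (\<forall>x\<in>I. \<forall>y\<in>I. x + y \<in> I) \<and> (\<forall>r. \<forall>x\<in>I. r * x \<in> I)"

definition maximal_ideal :: "'a::comm_ring_1 set \<Rightarrow> bool" where
  "maximal_ideal M \<longleftrightarrow> r_ideal M \<and> M \<noteq> UNIV \<and>
     (\<forall>J. r_ideal J \<and> M \<subseteq> J \<longrightarrow> J = M \<or> J = UNIV)"

definition chain_ring :: "'a::comm_ring_1 itself \<Rightarrow> bool" where
  "chain_ring _ \<longleftrightarrow> finite (UNIV :: 'a set) \<and> (0::'a) \<noteq> 1 \<and>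
     (\<forall>I J :: 'a set. r_ideal I \<and> r_ideal J \<longrightarrow> I \<subseteq> J \<or> J \<subseteq> I)"

definition ring_hom_on :: "('a::comm_ring_1 \<Rightarrow> 'b::comm_ring_1) \<Rightarrow> bool" where
  "ring_hom_on f \<longleftrightarrow> f 1 = 1 \<and> (\<forall>x y. f (x + y) = f x + f y) \<and> (\<forall>x y. f (x * y) = f x * f y)"

definition prime_pow :: "nat \<Rightarrow> bool" where
  "prime_pow q \<longleftrightarrow> (\<exists>p e. prime p \<and> e \<ge> 1 \<and> q = p ^ e)"

text \<open>Elements of RG are functions G -> R (coefficient vectors).\<close>
definition gmult :: "('g::{finite,ab_group_add} \<Rightarrow> 'r::comm_ring_1) \<Rightarrow> ('g \<Rightarrow> 'r) \<Rightarrow> ('g \<Rightarrow> 'r)" where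
  "gmult u v = (\<lambda>g. \<Sum>h\<in>UNIV. u h * v (g - h))"

definition gone :: "'g::{finite,ab_group_add} \<Rightarrow> 'r::comm_ring_1" where
  "gone = (\<lambda>g. if g = 0 then 1 else 0)"

definition qa_code :: "('g::{finite,ab_group_add} \<Rightarrow> 'r::comm_ring_1) \<Rightarrow> ('g \<Rightarrow> 'r)
    \<Rightarrow> (('g \<Rightarrow> 'r) \<times> ('g \<Rightarrow> 'r)) set" where
  "qa_code a b = {(gmult u a, gmult u b) | u. True}"

definition red_word :: "('r \<Rightarrow> 'f) \<Rightarrow> ('g \<Rightarrow> 'r) \<times> ('g \<Rightarrow> 'r) \<Rightarrow> ('g \<Rightarrow> 'f) \<times> ('g \<Rightarrow> 'f)" where
  "red_word f w = (f \<circ> fst w, f \<circ> snd w)"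

definition hweight :: "('g::finite \<Rightarrow> 'r::zero) \<times> ('g \<Rightarrow> 'r) \<Rightarrow> nat" where
  "hweight w = card {g. fst w g \<noteq> 0} + card {g. snd w g \<noteq> 0}"

definition zero_word :: "('g \<Rightarrow> 'r::zero) \<times> ('g \<Rightarrow> 'r)" where
  "zero_word = (\<lambda>_. 0, \<lambda>_. 0)"

text \<open>Minimum Hamming distance of a linear code = minimum weight of a nonzero codeword.\<close>
definition min_dist :: "(('g::finite \<Rightarrow> 'r::zero) \<times> ('g \<Rightarrow> 'r)) set \<Rightarrow> nat" where
  "min_dist C = Min {hweight w | w. w \<in> C \<and> w \<noteq> zero_word}"

definition lin_comb :: "nat \<Rightarrow> (nat \<Rightarrow> 'r::comm_ring_1) \<Rightarrow> (nat \<Rightarrow> ('g \<Rightarrow> 'r) \<times> ('g \<Rightarrow> 'r))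
    \<Rightarrow> ('g \<Rightarrow> 'r) \<times> ('g \<Rightarrow> 'r)" where
  "lin_comb k c b = ((\<lambda>g. \<Sum>i<k. c i * fst (b i) g), (\<lambda>g. \<Sum>i<k. c i * snd (b i) g))"

definition free_rank :: "(('g \<Rightarrow> 'r::comm_ring_1) \<times> ('g \<Rightarrow> 'r)) set \<Rightarrow> nat \<Rightarrow> bool" where
  "free_rank C k \<longleftrightarrow> (\<exists>b. (\<forall>i<k. b i \<in> C) \<and> (\<forall>c. lin_comb k c b \<in> C) \<and>
      (\<forall>w\<in>C. \<exists>!c. (\<forall>i\<ge>k. c i = 0) \<and> w = lin_comb k c b))"

end

(* Take d to be any coefficientwise lift of \<beta>. As C_{1,x} = {(u, u x)} is the graph of
   multiplication by x, it is free of rank n over every ring; hence k = n and C_{1,d} is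
   free of rank k. For the minimum distance let r generate the socle of S, the annihilator
   of m: then r x = 0 exactly when x lies in m, so r w has the support of \<pi>(w). Lifting a
   minimum-weight word of C_{1,\<beta>} and multiplying it by r gives a word of C_{1,d} of the
   same weight. Conversely, every nonzero word v of C_{1,d} has a nonzero multiple s v
   killed by m; its coefficients lie in r S, so s v = r w' with w' in C_{1,d}, and
   wt v \<ge> wt (s v) = wt (\<pi> w') \<ge> d_min. *)

theory Submission
  imports Defs "HOL-Library.FuncSet"
begin

section \<open>Finite chain rings\<close>

lemma r_ideal_multiples: "r_ideal {y. x dvd y}"
  unfolding r_ideal_def by auto

locale finite_chain_ring =
  fixes M :: "'s::comm_ring_1 set"
  assumes chain_ring: "chain_ring TYPE('s)"
    and maximal: "maximal_ideal M"
begin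

lemma finite_carrier: "finite (UNIV :: 's set)"
  using chain_ring unfolding chain_ring_def by simp

lemma nontrivial: "(0::'s) \<noteq> 1"
  using chain_ring unfolding chain_ring_def by simp

lemma ideals_linear: "r_ideal (I :: 's set) \<Longrightarrow> r_ideal J \<Longrightarrow> I \<subseteq> J \<or> J \<subseteq> I"
  using chain_ring unfolding chain_ring_def by blast

lemma ideal_M: "r_ideal M" and M_proper: "M \<noteq> UNIV"
  and M_maximal: "r_ideal J \<Longrightarrow> M \<subseteq> J \<Longrightarrow> J = M \<or> J = UNIV"
  using maximal by (simp_all add: maximal_ideal_def)

lemma mult_mem: "x \<in> M \<Longrightarrow> y * x \<in> M"
  using ideal_M unfolding r_ideal_def by blast

lemma add_mem: "x \<in> M \<Longrightarrow> y \<in> M \<Longrightarrow> x + y \<in> M"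
  using ideal_M unfolding r_ideal_def by blast

lemma one_not_mem: "1 \<notin> M"
  using mult_mem[of 1] M_proper by (metis UNIV_eq_I mult_1_right)

lemma proper_ideal_subset: "r_ideal (I :: 's set) \<Longrightarrow> I \<noteq> UNIV \<Longrightarrow> I \<subseteq> M"
  using ideals_linear[OF _ ideal_M, of I] M_maximal[of I] by blast

lemma unit_if_not_mem: "x \<notin> M \<Longrightarrow> x dvd 1"
proof (erule contrapos_np)
  assume "\<not> x dvd 1"
  then have "{y. x dvd y} \<noteq> UNIV" by blast
  then have "{y. x dvd y} \<subseteq> M" by (rule proper_ideal_subset[OF r_ideal_multiples])
  then show "x \<in> M" using dvd_refl[of x] by blast
qed

lemma nilpotent_if_mem:
  assumes x: "x \<in> M"
  shows "\<exists>N. x ^ N = 0"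
proof -
  have "\<not> inj (\<lambda>i::nat. x ^ i)"
    using finite_imageD[OF finite_subset[OF subset_UNIV finite_carrier]] by blast
  then obtain a b where "a < b" and ab: "x ^ a = x ^ b"
    unfolding inj_def by (metis linorder_neqE_nat)
  define p where "p = x ^ (b - a)"
  have "p \<in> M"
    unfolding p_def using \<open>a < b\<close> mult_mem[OF x]
    by (metis Suc_diff_Suc power_Suc2)
  then have "1 - p \<notin> M"
    using add_mem one_not_mem by fastforce
  then obtain y where y: "1 = (1 - p) * y"
    using unit_if_not_mem[OF \<open>1 - p \<notin> M\<close>] unfolding dvd_def by blast
  have "x ^ a * p = x ^ b"
    using \<open>a < b\<close> by (simp add: p_def flip: power_add)
  then have "x ^ a * (1 - p) = 0"
    using ab by (simp add: right_diff_distrib)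
  then have "x ^ a = 0"
    by (metis mult.assoc mult_1_right mult_zero_left y)
  then show ?thesis ..
qed

text \<open>Choose \<open>s\<close> with \<open>s A \<noteq> 0\<close> whose annihilator is as large as possible. If some
  \<open>m \<in> M\<close> does not kill \<open>s A\<close>, then, \<open>m\<close> being nilpotent, the last power
  \<open>m\<^sup>i\<close> with \<open>m\<^sup>i s A \<noteq> 0\<close> gives a multiple whose annihilator also contains \<open>m\<close>.\<close>
lemma ex_socle_multiple:
  assumes "\<exists>a\<in>A. a \<noteq> 0"
  shows "\<exists>s. (\<exists>a\<in>A. s * a \<noteq> 0) \<and> (\<forall>m\<in>M. \<forall>a\<in>A. m * s * a = 0)"
proof -
  define ann where "ann s = {t. \<forall>a\<in>A. t * s * a = 0}" for s
  define P where "P s \<longleftrightarrow> (\<exists>a\<in>A. s * a \<noteq> 0)" for s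
  have "P 1" using assms unfolding P_def by simp
  moreover have "card (ann s) < Suc (card (UNIV :: 's set))" for s
    using card_mono[OF finite_carrier subset_UNIV, of "ann s"] by simp
  ultimately obtain s where "P s" and s_max: "\<And>s'. P s' \<Longrightarrow> card (ann s') \<le> card (ann s)"
    using Lattices_Big.ex_has_greatest_nat[of P 1 "\<lambda>s. card (ann s)"] by blast
  have "m * s * a = 0" if m: "m \<in> M" and a: "a \<in> A" for m a
  proof (rule ccontr)
    assume msa: "m * s * a \<noteq> 0"
    obtain N where "m ^ N = 0" using nilpotent_if_mem[OF m] ..
    then have "\<not> P (m ^ N * s)" unfolding P_def by simp
    define j where "j = (LEAST j. \<not> P (m ^ j * s))"
    have not_Pj: "\<not> P (m ^ j * s)"
      unfolding j_def by (rule LeastI) fact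
    have "j \<noteq> 0"
    proof
      assume "j = 0"
      with not_Pj \<open>P s\<close> show False by simp
    qed
    then obtain i where j: "j = Suc i"
      using not0_implies_Suc by blast
    define s' where "s' = m ^ i * s"
    have "i < j" using j by simp
    then have "P s'"
      using not_less_Least[of i "\<lambda>j. \<not> P (m ^ j * s)"] unfolding j_def s'_def by simp
    have "t * s' * b = m ^ i * (t * s * b)" for t b
      unfolding s'_def by (simp add: ac_simps)
    then have "ann s \<subseteq> ann s'"
      unfolding ann_def by auto
    moreover have "m * s' * b = m ^ j * s * b" for b
      unfolding s'_def j by (simp add: mult.assoc)
    then have "m \<in> ann s'"
      using not_Pj unfolding ann_def P_def by simp
    moreover have "m \<notin> ann s"
      using msa a unfolding ann_def by blast
    ultimately have "ann s \<subset> ann s'"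
      by blast
    then have "card (ann s) < card (ann s')"
      by (rule psubset_card_mono[OF finite_subset[OF subset_UNIV finite_carrier]])
    with s_max[OF \<open>P s'\<close>] show False by simp
  qed
  with \<open>P s\<close> show ?thesis unfolding P_def by blast
qed

lemma ex_socle_generator:
  "\<exists>r. r \<noteq> 0 \<and> (\<forall>x. r * x = 0 \<longleftrightarrow> x \<in> M) \<and> (\<forall>y. (\<forall>m\<in>M. m * y = 0) \<longrightarrow> r dvd y)"
proof -
  obtain r where "r \<noteq> 0" and rM: "\<And>m. m \<in> M \<Longrightarrow> m * r = 0"
    using ex_socle_multiple[of "{1}"] nontrivial by auto
  have ann_r: "x \<in> M" if "r * x = 0" for x
  proof (rule ccontr)
    assume "x \<notin> M"
    then obtain y where "1 = x * y"
      using unit_if_not_mem unfolding dvd_def by blast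
    then have "r = r * x * y" by (simp add: mult.assoc)
    with \<open>r * x = 0\<close> \<open>r \<noteq> 0\<close> show False by simp
  qed
  have ann_M: "r dvd y" if y: "\<forall>m\<in>M. m * y = 0" for y
  proof -
    have "r dvd y \<or> y dvd r"
      using ideals_linear[OF r_ideal_multiples r_ideal_multiples, of r y]
      by (metis dvd_refl mem_Collect_eq subsetD)
    then show ?thesis
    proof
      assume "y dvd r"
      then obtain t where t: "r = y * t" by (rule dvdE)
      with y \<open>r \<noteq> 0\<close> have "t \<notin> M" by (auto simp: mult.commute)
      then obtain t' where "1 = t * t'"
        using unit_if_not_mem unfolding dvd_def by blast
      then have "y = r * t'" by (simp add: t mult.assoc)
      then show ?thesis ..
    qed
  qed
  have "r * x = 0" if "x \<in> M" for x
    using rM[OF that] by (simp add: mult.commute)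
  with ann_r have "\<forall>x. r * x = 0 \<longleftrightarrow> x \<in> M"
    by blast
  with \<open>r \<noteq> 0\<close> ann_M show ?thesis
    by blast
qed

end

section \<open>Quasi-abelian codes and reduction\<close>

lemma gmult_gone_right: "gmult u (gone :: 'g::{finite,ab_group_add} \<Rightarrow> 'r::comm_ring_1) = u"
proof
  fix g :: 'g
  have "gmult u (gone :: 'g \<Rightarrow> 'r) g = (\<Sum>h\<in>UNIV. if h = g then u h else 0)"
    unfolding gmult_def gone_def by (rule sum.cong) auto
  then show "gmult u (gone :: 'g \<Rightarrow> 'r) g = u g" by simp
qed

lemma gmult_sum_left:
  "gmult (\<lambda>h. \<Sum>i\<in>I. c i * f i h) x g = (\<Sum>i\<in>I. c i * gmult (f i) x g)"
  unfolding gmult_def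
  by (simp add: sum_distrib_left sum_distrib_right mult.assoc sum.swap[of _ UNIV])

lemma gmult_scale_left: "gmult (\<lambda>h. s * u h) x = (\<lambda>g. s * gmult u x g)"
  unfolding gmult_def by (simp add: sum_distrib_left mult.assoc)

lemma qa_code_gone: "qa_code gone x = {(u, gmult u x) | u. True}"
  unfolding qa_code_def gmult_gone_right ..

lemma qa_code_gone_ex_nonzero:
  assumes "(0::'r::comm_ring_1) \<noteq> 1"
  shows "\<exists>w\<in>qa_code gone (x :: 'g::{finite,ab_group_add} \<Rightarrow> 'r). w \<noteq> zero_word"
proof
  have "(gone :: 'g \<Rightarrow> 'r) 0 \<noteq> 0"
    using assms by (simp add: gone_def)
  then show "(gone, gmult gone x) \<noteq> zero_word"
    unfolding zero_word_def by (auto dest: fun_cong[of _ _ 0])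
qed (auto simp: qa_code_gone)

lemma ring_hom_on_zero: "ring_hom_on f \<Longrightarrow> f 0 = 0"
  unfolding ring_hom_on_def by (metis add_cancel_left_right add_0)

lemma ring_hom_on_sum: "ring_hom_on f \<Longrightarrow> f (sum g A) = (\<Sum>x\<in>A. f (g x))"
  using sum_comp_morphism[of f g A] ring_hom_on_zero unfolding ring_hom_on_def comp_def by metis

lemma ring_hom_on_gmult:
  "ring_hom_on f \<Longrightarrow> f \<circ> gmult u v = gmult (f \<circ> u) (f \<circ> v)"
  unfolding gmult_def by (simp add: fun_eq_iff ring_hom_on_sum) (simp add: ring_hom_on_def)

lemma red_word_qa_code_gone:
  assumes "ring_hom_on f" and "surj f" and "f \<circ> d = \<beta>"
  shows "red_word f ` qa_code gone d = qa_code gone \<beta>"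
proof -
  have red: "red_word f (u, gmult u d) = (f \<circ> u, gmult (f \<circ> u) \<beta>)" for u
    unfolding red_word_def by (simp add: ring_hom_on_gmult[OF assms(1)] assms(3))
  have "f \<circ> (inv f \<circ> t) = t" for t
    using \<open>surj f\<close> by (simp add: fun_eq_iff surj_f_inv_f)
  then have "(t, gmult t \<beta>) \<in> red_word f ` qa_code gone d" for t
    unfolding qa_code_gone image_iff using red by (metis (mono_tags, lifting) mem_Collect_eq)
  then show ?thesis
    unfolding qa_code_gone using red by auto
qed

section \<open>Free rank\<close>

lemma card_eventually_zero_funs:
  "card {c :: nat \<Rightarrow> 'r::zero. \<forall>i\<ge>k. c i = 0} = card (UNIV :: 'r set) ^ k"
proof -
  have "bij_betw (\<lambda>c. restrict c {..<k}) {c. \<forall>i\<ge>k. c i = 0} ({..<k} \<rightarrow>\<^sub>E (UNIV :: 'r set))"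
    by (rule bij_betw_byWitness[where f' = "\<lambda>c i. if i < k then c i else 0"])
      (auto simp: fun_eq_iff PiE_def extensional_def)
  then have "card {c :: nat \<Rightarrow> 'r. \<forall>i\<ge>k. c i = 0} = card ({..<k} \<rightarrow>\<^sub>E (UNIV :: 'r set))"
    by (simp add: bij_betw_same_card)
  also have "\<dots> = card (UNIV :: 'r set) ^ k"
    by (simp add: card_PiE)
  finally show ?thesis .
qed

lemma card_free_rank:
  assumes "free_rank (C :: (('g \<Rightarrow> 'r::comm_ring_1) \<times> _) set) k"
  shows "card C = card (UNIV :: 'r set) ^ k"
proof -
  define Z where "Z = {c :: nat \<Rightarrow> 'r. \<forall>i\<ge>k. c i = 0}"
  obtain b where "\<forall>c. lin_comb k c b \<in> C"
    and "\<forall>w\<in>C. \<exists>!c. (\<forall>i\<ge>k. c i = 0) \<and> w = lin_comb k c b"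
    using assms unfolding free_rank_def by blast
  then have in_C: "\<And>c. lin_comb k c b \<in> C"
    and unique: "\<And>w. w \<in> C \<Longrightarrow> \<exists>!c. c \<in> Z \<and> w = lin_comb k c b"
    unfolding Z_def by simp_all
  have "bij_betw (\<lambda>c. lin_comb k c b) Z C"
  proof (rule bij_betwI')
    fix c c' assume "c \<in> Z" "c' \<in> Z"
    then show "(lin_comb k c b = lin_comb k c' b) = (c = c')"
      using unique[OF in_C[of c]] by auto
  next
    fix w assume "w \<in> C"
    then show "\<exists>c\<in>Z. w = lin_comb k c b"
      using unique by blast
  qed (rule in_C)
  then have "card C = card Z"
    by (simp add: bij_betw_same_card)
  then show ?thesis
    unfolding Z_def by (simp add: card_eventually_zero_funs)
qed

lemma ex_standard_basis:
  "\<exists>b :: nat \<Rightarrow> 'g::finite \<Rightarrow> 'r::comm_ring_1. \<forall>u. \<exists>!c.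
     (\<forall>i\<ge>card (UNIV :: 'g set). c i = 0) \<and> u = (\<lambda>g. \<Sum>i<card (UNIV :: 'g set). c i * b i g)"
proof -
  define n where "n = card (UNIV :: 'g set)"
  obtain e where e: "bij_betw e {..<n} (UNIV :: 'g set)"
    using ex_bij_betw_nat_finite[of "UNIV :: 'g set"] unfolding n_def
    by (auto simp: lessThan_atLeast0)
  define b where "b i g = (if g = e i then 1 else 0 :: 'r)" for i g
  define vec where "vec c g = (\<Sum>i<n. c i * b i g)" for c g
  have vec_at: "vec c (e j) = c j" if "j < n" for c j
  proof -
    have "vec c (e j) = (\<Sum>i<n. if i = j then c i else 0)"
      using e that unfolding vec_def b_def bij_betw_def inj_on_def
      by (intro sum.cong) auto
    then show ?thesis using that by simp
  qed
  have vec_coords: "vec (\<lambda>i. if i < n then u (e i) else 0) = u" for u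
  proof
    fix g
    obtain j where "j < n" "g = e j" using e unfolding bij_betw_def by auto
    then show "vec (\<lambda>i. if i < n then u (e i) else 0) g = u g"
      using vec_at by simp
  qed
  have "\<exists>!c. (\<forall>i\<ge>n. c i = 0) \<and> u = vec c" for u
  proof (rule ex1I[where a = "\<lambda>i. if i < n then u (e i) else 0"])
    fix c assume "(\<forall>i\<ge>n. c i = 0) \<and> u = vec c"
    then show "c = (\<lambda>i. if i < n then u (e i) else 0)"
      by (auto simp: fun_eq_iff vec_at)
  qed (simp add: vec_coords)
  then show ?thesis
    unfolding vec_def n_def by blast
qed

lemma free_rank_qa_code_gone:
  "free_rank (qa_code gone (x :: 'g::{finite,ab_group_add} \<Rightarrow> 'r::comm_ring_1)) (card (UNIV :: 'g set))"
proof -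
  define n where "n = card (UNIV :: 'g set)"
  obtain b :: "nat \<Rightarrow> 'g \<Rightarrow> 'r" where basis: "\<And>u. \<exists>!c. (\<forall>i\<ge>n. c i = 0) \<and> u = (\<lambda>g. \<Sum>i<n. c i * b i g)"
    using ex_standard_basis unfolding n_def by blast
  define vec where "vec c g = (\<Sum>i<n. c i * b i g)" for c g
  have lin_comb: "lin_comb n c (\<lambda>i. (b i, gmult (b i) x)) = (vec c, gmult (vec c) x)" for c
    unfolding lin_comb_def vec_def by (auto simp: gmult_sum_left fun_eq_iff)
  have pair_eq: "(u, gmult u x) = (vec c, gmult (vec c) x) \<longleftrightarrow> u = vec c" for u c
    by auto
  show ?thesis
    unfolding free_rank_def n_def[symmetric] qa_code_gone
  proof (intro exI[of _ "\<lambda>i. (b i, gmult (b i) x)"] conjI allI impI ballI)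
    show "(b i, gmult (b i) x) \<in> {(u, gmult u x) |u. True}" for i
      by blast
    show "lin_comb n c (\<lambda>i. (b i, gmult (b i) x)) \<in> {(u, gmult u x) |u. True}" for c
      unfolding lin_comb by blast
    fix w assume "w \<in> {(u, gmult u x) |u. True}"
    then obtain u where w: "w = (u, gmult u x)" by blast
    show "\<exists>!c. (\<forall>i\<ge>n. c i = 0) \<and> w = lin_comb n c (\<lambda>i. (b i, gmult (b i) x))"
      unfolding w lin_comb pair_eq vec_def by (rule basis)
  qed
qed

lemma free_rank_qa_code_gone_iff:
  fixes x :: "'g::{finite,ab_group_add} \<Rightarrow> 'r::comm_ring_1"
  assumes "finite (UNIV :: 'r set)" and "(0::'r) \<noteq> 1"
  shows "free_rank (qa_code gone x) k \<longleftrightarrow> k = card (UNIV :: 'g set)"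
proof
  have "card {0::'r, 1} \<le> card (UNIV :: 'r set)"
    using assms(1) by (rule card_mono) simp
  then have "1 < card (UNIV :: 'r set)"
    using assms(2) by simp
  moreover assume "free_rank (qa_code gone x) k"
  then have "card (UNIV :: 'r set) ^ k = card (UNIV :: 'r set) ^ card (UNIV :: 'g set)"
    using card_free_rank free_rank_qa_code_gone[of x] by metis
  ultimately show "k = card (UNIV :: 'g set)"
    by simp
qed (simp add: free_rank_qa_code_gone)

section \<open>Hamming weight and minimum distance\<close>

definition smult_word :: "'r::times \<Rightarrow> ('g \<Rightarrow> 'r) \<times> ('g \<Rightarrow> 'r) \<Rightarrow> ('g \<Rightarrow> 'r) \<times> ('g \<Rightarrow> 'r)" where
  "smult_word s w = (\<lambda>g. s * fst w g, \<lambda>g. s * snd w g)"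

lemma smult_word_qa_code_gone:
  assumes "w \<in> qa_code gone x"
  shows "smult_word s w \<in> qa_code gone x"
proof -
  obtain u where "w = (u, gmult u x)"
    using assms unfolding qa_code_gone by blast
  then have "smult_word s w = ((\<lambda>g. s * u g), gmult (\<lambda>g. s * u g) x)"
    unfolding smult_word_def by (simp add: gmult_scale_left)
  then show ?thesis
    unfolding qa_code_gone by blast
qed

lemma qa_code_gone_dvd:
  assumes "w \<in> qa_code gone x" and "\<And>g. r dvd fst w g"
  shows "\<exists>w'\<in>qa_code gone x. w = smult_word r w'"
proof -
  obtain u where w: "w = (u, gmult u x)"
    using assms(1) unfolding qa_code_gone by blast
  obtain y where "\<And>g. u g = r * y g"
    using assms(2) unfolding w dvd_def by (metis fst_conv)
  then have "u = (\<lambda>g. r * y g)" by blast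
  then have "w = smult_word r (y, gmult y x)"
    unfolding w smult_word_def by (simp add: gmult_scale_left)
  then show ?thesis
    unfolding qa_code_gone by blast
qed

lemma hweight_smult_word_le:
  "hweight (smult_word (s :: 'r::mult_zero) (w :: ('g::finite \<Rightarrow> 'r) \<times> _)) \<le> hweight w"
  unfolding hweight_def smult_word_def by (auto intro!: add_mono card_mono)

lemma hweight_smult_word_eq_red_word:
  assumes "\<And>x. r * x = 0 \<longleftrightarrow> f x = 0"
  shows "hweight (smult_word r w) = hweight (red_word f w)"
  unfolding hweight_def smult_word_def red_word_def using assms by simp

lemma hweight_eq_0_iff: "hweight (w :: ('g::finite \<Rightarrow> 'r::zero) \<times> ('g \<Rightarrow> 'r)) = 0 \<longleftrightarrow> w = zero_word"
  unfolding hweight_def zero_word_def by (cases w) (auto simp: fun_eq_iff)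

lemma finite_hweights:
  "finite {hweight w | w. w \<in> (C :: (('g::finite \<Rightarrow> 'r::zero) \<times> ('g \<Rightarrow> 'r)) set) \<and> w \<noteq> zero_word}"
proof (rule finite_subset)
  have "hweight w \<le> card (UNIV :: 'g set) + card (UNIV :: 'g set)" for w :: "('g \<Rightarrow> 'r) \<times> ('g \<Rightarrow> 'r)"
    unfolding hweight_def by (intro add_mono card_mono) simp_all
  then show "{hweight w | w. w \<in> C \<and> w \<noteq> zero_word} \<subseteq> {..card (UNIV :: 'g set) + card (UNIV :: 'g set)}"
    by auto
qed simp

lemma min_dist_le:
  assumes "w \<in> C" and "w \<noteq> zero_word"
  shows "min_dist C \<le> hweight w"
  unfolding min_dist_def using assms by (intro Min_le finite_hweights) blast

lemma min_dist_attained: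
  assumes "w \<in> C" and "w \<noteq> zero_word"
  shows "\<exists>v\<in>C. v \<noteq> zero_word \<and> hweight v = min_dist C"
proof -
  have "min_dist C \<in> {hweight w | w. w \<in> C \<and> w \<noteq> zero_word}"
    unfolding min_dist_def using assms by (intro Min_in finite_hweights) blast
  then show ?thesis by auto
qed

section \<open>Lifting codes from the residue field\<close>

context finite_chain_ring
begin

lemma ex_socle_multiple_word:
  assumes "v \<noteq> zero_word"
  shows "\<exists>s. smult_word s v \<noteq> zero_word \<and> (\<forall>m\<in>M. smult_word (m * s) v = zero_word)"
proof -
  define A where "A = range (fst v) \<union> range (snd v)"
  have "\<exists>a\<in>A. a \<noteq> 0"
    using assms unfolding A_def zero_word_def by (metis Un_iff prod.exhaust_sel rangeI ext)
  from ex_socle_multiple[OF this] obtain s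
    where "(\<exists>a\<in>A. s * a \<noteq> 0) \<and> (\<forall>m\<in>M. \<forall>a\<in>A. m * s * a = 0)" ..
  then have "\<exists>a\<in>A. s * a \<noteq> 0" and "\<forall>m\<in>M. \<forall>a\<in>A. m * s * a = 0"
    by blast+
  then have "smult_word s v \<noteq> zero_word" and "\<forall>m\<in>M. smult_word (m * s) v = zero_word"
    unfolding A_def smult_word_def zero_word_def by (auto dest: fun_cong)
  then show ?thesis by blast
qed

end

locale residue_map = finite_chain_ring M for M :: "'s::comm_ring_1 set" +
  fixes red :: "'s \<Rightarrow> 'f::field"
  assumes ring_hom: "ring_hom_on red"
    and surj: "surj red"
    and kernel: "{x. red x = 0} = M"
begin

lemma ex_socle_generator_red:
  "\<exists>r. (\<forall>x. r * x = 0 \<longleftrightarrow> red x = 0) \<and> (\<forall>y. (\<forall>m\<in>M. m * y = 0) \<longrightarrow> r dvd y)"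
  using ex_socle_generator kernel by blast

lemma min_dist_lift_le:
  assumes lift: "red \<circ> d = \<beta>"
  shows "min_dist (qa_code gone d) \<le> min_dist (qa_code gone \<beta>)"
proof -
  obtain r where r: "\<And>x. r * x = 0 \<longleftrightarrow> red x = 0"
    using ex_socle_generator_red by blast
  obtain v0 where "v0 \<in> qa_code gone \<beta>" "v0 \<noteq> zero_word"
    using qa_code_gone_ex_nonzero[OF zero_neq_one] by blast
  then obtain v where v: "v \<in> qa_code gone \<beta>" "v \<noteq> zero_word" "hweight v = min_dist (qa_code gone \<beta>)"
    using min_dist_attained by blast
  then obtain w where w: "w \<in> qa_code gone d" "red_word red w = v"
    unfolding red_word_qa_code_gone[OF ring_hom surj lift, symmetric] by blast
  have weight: "hweight (smult_word r w) = hweight v"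
    unfolding w(2)[symmetric] by (rule hweight_smult_word_eq_red_word[OF r])
  then have "smult_word r w \<noteq> zero_word"
    using v(2) hweight_eq_0_iff by metis
  then have "min_dist (qa_code gone d) \<le> hweight (smult_word r w)"
    by (intro min_dist_le smult_word_qa_code_gone w(1))
  then show ?thesis
    using weight v(3) by simp
qed

lemma min_dist_lift_ge:
  assumes lift: "red \<circ> d = \<beta>"
  shows "min_dist (qa_code gone \<beta>) \<le> min_dist (qa_code gone d)"
proof -
  obtain r where r: "\<And>x. r * x = 0 \<longleftrightarrow> red x = 0"
    and r_socle: "\<And>y. \<forall>m\<in>M. m * y = 0 \<Longrightarrow> r dvd y"
    using ex_socle_generator_red by blast
  obtain v0 where "v0 \<in> qa_code gone d" "v0 \<noteq> zero_word"
    using qa_code_gone_ex_nonzero[OF nontrivial] by blast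
  then obtain v where v: "v \<in> qa_code gone d" "v \<noteq> zero_word" "hweight v = min_dist (qa_code gone d)"
    using min_dist_attained by blast
  obtain s where sv_nonzero: "smult_word s v \<noteq> zero_word"
    and s_socle: "\<forall>m\<in>M. smult_word (m * s) v = zero_word"
    using ex_socle_multiple_word[OF v(2)] by blast
  have "\<forall>m\<in>M. m * fst (smult_word s v) g = 0" for g
    using s_socle unfolding smult_word_def zero_word_def by (simp add: mult.assoc fun_eq_iff)
  then have "r dvd fst (smult_word s v) g" for g
    by (rule r_socle)
  then obtain w' where w': "w' \<in> qa_code gone d" "smult_word s v = smult_word r w'"
    using qa_code_gone_dvd[OF smult_word_qa_code_gone[OF v(1)]] by blast
  have weight: "hweight (red_word red w') = hweight (smult_word s v)"
    unfolding w'(2) by (rule hweight_smult_word_eq_red_word[OF r, symmetric])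
  have "red_word red w' \<in> qa_code gone \<beta>"
    using w'(1) red_word_qa_code_gone[OF ring_hom surj lift] by blast
  moreover have "red_word red w' \<noteq> zero_word"
    using weight sv_nonzero hweight_eq_0_iff by metis
  ultimately have "min_dist (qa_code gone \<beta>) \<le> hweight (red_word red w')"
    by (rule min_dist_le)
  also have "\<dots> \<le> hweight v"
    using weight hweight_smult_word_le by metis
  finally show ?thesis
    using v(3) by simp
qed

end

theorem theorem4p3:
  fixes red :: "'s::comm_ring_1 \<Rightarrow> 'f::field"
    and M :: "'s set"
    and q :: nat
    and \<beta> :: "'g::{finite,ab_group_add} \<Rightarrow> 'f"
    and k dmin :: nat
  assumes "chain_ring TYPE('s)"
    and "maximal_ideal M"
    and "ring_hom_on red" and "surj red" and "{x. red x = 0} = M"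
    and "finite (UNIV :: 'f set)"
    and "prime_pow q" and "card (UNIV :: 'f set) = q ^ 2"
    and "odd (card (UNIV :: 'g set))" and "coprime (card (UNIV :: 'g set)) q"
    and "free_rank (qa_code gone \<beta>) k"
    and "min_dist (qa_code gone \<beta>) = dmin"
  shows "\<exists>d :: 'g \<Rightarrow> 's. red \<circ> d = \<beta> \<and>
           red_word red ` qa_code gone d = qa_code gone \<beta> \<and>
           free_rank (qa_code gone d) k \<and>
           min_dist (qa_code gone d) = dmin"
proof -
  interpret residue_map M red
    by unfold_locales (rule assms)+
  define d where "d = inv red \<circ> \<beta>"
  have lift: "red \<circ> d = \<beta>"
    using surj by (simp add: d_def fun_eq_iff surj_f_inv_f)
  have "k = card (UNIV :: 'g set)"
    using assms(11) free_rank_qa_code_gone_iff[OF assms(6) zero_neq_one] by blast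
  then have "free_rank (qa_code gone d) k"
    by (simp add: free_rank_qa_code_gone)
  moreover have "min_dist (qa_code gone d) = dmin"
    using min_dist_lift_le[OF lift] min_dist_lift_ge[OF lift] assms(12) by simp
  ultimately show ?thesis
    using lift red_word_qa_code_gone[OF ring_hom surj lift] by blast
qed

end
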